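(* Let $n\ge 1$. Let $H_1$ and $H_2$ be two edge-disjoint Hamilton cycles of $G_{n,2}$, and let $E_1$ and $E_2$ be two edge-disjoint directed Hamilton cycles of $Q_{2n}$ (each starting at the origin $\mathbf 0$). Then the four Hamilton cycles $f(E_1,H_1)$, $f(E_1,H_2)$, $f(E_2,H_1)$, $f(E_2,H_2)$ of $Q_{4n}$ are pairwise edge-disjoint.
   Context: The hypercube $Q_{2n}$ is realized as the graph whose vertices are the quaternary strings $q_1q_2\cdots q_n$ with $q_i\in\{0,1,2,3\}$, two strings being adjacent iff they differ in exactly one position and there by $\pm1 \pmod 4$ (this is $C_4\Box\cdots\Box C_4$, $n$ factors, which is isomorphic to the $2n$-dimensional hypercube). The origin is $\mathbf 0=00\cdots0$. For $k\ge1$, $G_{n,k}$ denotes the Cartesian product $C_{4^n}\Box\cdots\Box C_{4^n}$ ($k$ factors), with vertex set $(\mathbb Z/4^n\mathbb Z)^k$, two vertices adjacent iff they differ in exactly one coordinate and there by $\pm1 \pmod{4^n}$. A directed Hamilton cycle $E$ of $Q_{2n}$ starting at $\mathbf 0$ lists the vertices as $e_0=\mathbf 0,e_1,\dots,e_{4^n-1}$ with consecutive ones (and $e_{4^n-1},e_0$) adjacent; put $\pi_E(e_p)=p\in\mathbb Z/4^n\mathbb Z$. Identify $V(Q_{4n})$ with pairs $(u,w)$ of quaternary strings of length $n$ (the first $n$ digits and the last $n$ digits), so $Q_{4n}=Q_{2n}\Box Q_{2n}$. The map $\Phi_E(u,w)=(\pi_E(u),\pi_E(w))$ is a bijection $V(Q_{4n})\to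 V(G_{n,2})$ such that $\Phi_E^{-1}$ sends every edge of $G_{n,2}$ to an edge of $Q_{4n}$. For a Hamilton cycle $H$ of $G_{n,2}$, $f(E,H):=\Phi_E^{-1}(H)$, a Hamilton cycle of $Q_{4n}$. *)

theory Defs
  imports Main
begin

(* Quaternary strings of length n: vertices of Q_{2n} = C_4 \<box> ... \<box> C_4 *)
definition quat_strings :: "nat \<Rightarrow> nat list set" where
  "quat_strings n = {q. length q = n \<and> (\<forall>x\<in>set q. x < 4)}"

definition Q_adj :: "nat list \<Rightarrow> nat list \<Rightarrow> bool" where
  "Q_adj q r \<longleftrightarrow> length q = length r \<and>
     (\<exists>i<length q. (\<forall>j<length q. j \<noteq> i \<longrightarrow> q ! j = r ! j) \<and>
        (r ! i = (q ! i + 1) mod 4 \<or> q ! i = (r ! i + 1) mod 4))"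

(* G_{n,2} = C_{4^n} \<box> C_{4^n}, vertex set (Z/4^n Z)^2 represented by {0..<4^n}^2 *)
definition G_verts :: "nat \<Rightarrow> (nat \<times> nat) set" where
  "G_verts n = {..<4^n} \<times> {..<4^n}"

definition G_adj :: "nat \<Rightarrow> nat \<times> nat \<Rightarrow> nat \<times> nat \<Rightarrow> bool" where
  "G_adj n x y \<longleftrightarrow>
     (fst x = fst y \<and> (snd y = (snd x + 1) mod 4^n \<or> snd x = (snd y + 1) mod 4^n)) \<or>
     (snd x = snd y \<and> (fst y = (fst x + 1) mod 4^n \<or> fst x = (fst y + 1) mod 4^n))"

definition ham_cycle :: "'a set \<Rightarrow> ('a \<Rightarrow> 'a \<Rightarrow> bool) \<Rightarrow> 'a list \<Rightarrow> bool" where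
  "ham_cycle V adj xs \<longleftrightarrow> distinct xs \<and> set xs = V \<and>
     (\<forall>i<length xs. adj (xs ! i) (xs ! ((i + 1) mod length xs)))"

definition cyc_edges :: "'a list \<Rightarrow> 'a set set" where
  "cyc_edges xs = {{xs ! i, xs ! ((i + 1) mod length xs)} | i. i < length xs}"

definition dir_ham_Q :: "nat \<Rightarrow> nat list list \<Rightarrow> bool" where
  "dir_ham_Q n E \<longleftrightarrow> ham_cycle (quat_strings n) Q_adj E \<and> E ! 0 = replicate n 0"

definition pi_E :: "nat list list \<Rightarrow> nat list \<Rightarrow> nat" where
  "pi_E E v = (THE p. p < length E \<and> E ! p = v)"

(* Phi_E(u,w) = (pi_E u, pi_E w), vertices of Q_{4n} identified with pairs (u,w) *)
definition Phi_E :: "nat list list \<Rightarrow> nat list \<times> nat list \<Rightarrow> nat \<times> nat" where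
  "Phi_E E uw = (pi_E E (fst uw), pi_E E (snd uw))"

definition f_EH :: "nat \<Rightarrow> nat list list \<Rightarrow> (nat \<times> nat) list \<Rightarrow> (nat list \<times> nat list) list" where
  "f_EH n E H = map (inv_into (quat_strings n \<times> quat_strings n) (Phi_E E)) H"

end

theory Submission
  imports Defs
begin

text \<open>On the vertices of \<open>G\<^sub>n\<^sub>,\<^sub>2\<close>, the inverse of \<open>\<Phi>\<^sub>E\<close> is \<open>(a, b) \<mapsto> (e\<^sub>a, e\<^sub>b)\<close>. An edge of \<open>G\<^sub>n\<^sub>,\<^sub>2\<close>
  moves in one coordinate only, so its image in \<open>Q\<^sub>4\<^sub>n\<close> is a copy \<open>{x} \<times> d\<close> or \<open>d \<times> {x}\<close> of an edge
  \<open>d\<close> of \<open>E\<close>. Hence \<open>f(E,H)\<close> and \<open>f(E,H')\<close> inherit the edge-disjointness of \<open>H, H'\<close> through the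
  injectivity of \<open>\<Phi>\<^sub>E\<^sup>-\<^sup>1\<close>, while a common edge of \<open>f(E\<^sub>1,H)\<close> and \<open>f(E\<^sub>2,H')\<close> would project onto a
  common edge of \<open>E\<^sub>1\<close> and \<open>E\<^sub>2\<close>, or onto a loop.\<close>

lemma card_quat_strings: "card (quat_strings n) = 4 ^ n"
proof -
  have "quat_strings n = {xs. set xs \<subseteq> {..<4} \<and> length xs = n}"
    unfolding quat_strings_def by auto
  then show ?thesis
    by (simp add: card_lists_length_eq)
qed

lemma distinct_dir_ham_Q: "dir_ham_Q n E \<Longrightarrow> distinct E"
  unfolding dir_ham_Q_def ham_cycle_def by simp

lemma length_dir_ham_Q: "dir_ham_Q n E \<Longrightarrow> length E = 4 ^ n"
  unfolding dir_ham_Q_def ham_cycle_def by (metis card_quat_strings distinct_card)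

lemma pi_E_nth: "distinct E \<Longrightarrow> i < length E \<Longrightarrow> pi_E E (E ! i) = i"
  unfolding pi_E_def by (rule the_equality) (auto simp: nth_eq_iff_index_eq)

lemma nth_pi_E: "distinct E \<Longrightarrow> v \<in> set E \<Longrightarrow> E ! pi_E E v = v"
  by (metis in_set_conv_nth pi_E_nth)

lemma Phi_E_eq_map_prod: "Phi_E E = map_prod (pi_E E) (pi_E E)"
  by (simp add: fun_eq_iff Phi_E_def)

lemma f_EH_eq_map:
  assumes E: "dir_ham_Q n E" and H: "set H \<subseteq> G_verts n"
  shows "f_EH n E H = map (map_prod ((!) E) ((!) E)) H"
proof -
  have dist: "distinct E"
    using E by (rule distinct_dir_ham_Q)
  have set_E: "set E = quat_strings n"
    using E unfolding dir_ham_Q_def ham_cycle_def by simp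
  have len: "length E = 4 ^ n"
    using E by (rule length_dir_ham_Q)
  have inj_pi: "inj_on (pi_E E) (quat_strings n)"
    by (rule inj_on_inverseI[where g = "(!) E"]) (use nth_pi_E[OF dist] set_E in auto)
  have inj: "inj_on (Phi_E E) (quat_strings n \<times> quat_strings n)"
    unfolding Phi_E_eq_map_prod using map_prod_inj_on[OF inj_pi inj_pi] .
  have "inv_into (quat_strings n \<times> quat_strings n) (Phi_E E) p = map_prod ((!) E) ((!) E) p"
    if "p \<in> G_verts n" for p
  proof (rule inv_into_f_eq[OF inj])
    show "map_prod ((!) E) ((!) E) p \<in> quat_strings n \<times> quat_strings n"
      using that len by (cases p) (auto simp: G_verts_def simp flip: set_E)
    show "Phi_E E (map_prod ((!) E) ((!) E) p) = p"
      using that len by (cases p) (simp add: Phi_E_def G_verts_def pi_E_nth[OF dist])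
  qed
  then show ?thesis
    unfolding f_EH_def using H by (intro map_cong) auto
qed

lemma Suc_mod_length_less: "i < length xs \<Longrightarrow> Suc i mod length xs < length xs"
  by (metis gr_implies_not0 mod_less_divisor neq0_conv)

lemma nth_map_Suc_mod:
  "i < length xs \<Longrightarrow> map g xs ! (Suc i mod length xs) = g (xs ! (Suc i mod length xs))"
  by (simp add: Suc_mod_length_less)

lemma cyc_edges_map: "cyc_edges (map g xs) = (`) g ` cyc_edges xs"
proof -
  have "cyc_edges (map g xs) = {g ` {xs ! i, xs ! (Suc i mod length xs)} | i. i < length xs}"
    unfolding cyc_edges_def length_map
    by (intro Collect_cong ex_cong1) (auto simp: nth_map_Suc_mod)
  then show ?thesis
    unfolding cyc_edges_def by (simp add: setcompr_eq_image image_image)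
qed

lemma singleton_notin_cyc_edges:
  assumes "distinct xs" and "2 \<le> length xs"
  shows "{v} \<notin> cyc_edges xs"
proof
  assume "{v} \<in> cyc_edges xs"
  then obtain i where i: "i < length xs" and loop: "xs ! i = xs ! (Suc i mod length xs)"
    unfolding cyc_edges_def by (auto simp: doubleton_eq_iff)
  have "i \<noteq> Suc i mod length xs"
  proof (cases "Suc i < length xs")
    case False
    then have "Suc i = length xs" using i by simp
    then show ?thesis using assms(2) by simp
  qed simp
  then show False
    using loop nth_eq_iff_index_eq[OF assms(1) i Suc_mod_length_less[OF i]] by simp
qed

lemma cyc_edges_subset_set: "d \<in> cyc_edges xs \<Longrightarrow> d \<subseteq> set xs"
  unfolding cyc_edges_def by (auto simp: Suc_mod_length_less)

lemma cyc_edges_cyclic_neighbours: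
  assumes "a < length xs" and "b < length xs"
    and "b = Suc a mod length xs \<or> a = Suc b mod length xs"
  shows "{xs ! a, xs ! b} \<in> cyc_edges xs"
  using assms unfolding cyc_edges_def by (auto simp: insert_commute)

lemma cyc_edges_map_disjoint:
  assumes "inj_on g A" and "set xs \<subseteq> A" and "set ys \<subseteq> A"
    and "cyc_edges xs \<inter> cyc_edges ys = {}"
  shows "cyc_edges (map g xs) \<inter> cyc_edges (map g ys) = {}"
proof -
  have "d = d'" if "d \<in> cyc_edges xs" "d' \<in> cyc_edges ys" "g ` d = g ` d'" for d d'
  proof -
    have "d \<subseteq> A" "d' \<subseteq> A"
      using that(1,2) assms(2,3) cyc_edges_subset_set by blast+
    then show ?thesis
      using inj_on_image_eq_iff[OF assms(1)] that(3) by blast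
  qed
  then show ?thesis
    using assms(4) unfolding cyc_edges_map by (force simp: disjoint_iff)
qed

lemma inj_on_map_prod_nth:
  assumes "distinct E"
  shows "inj_on (map_prod ((!) E) ((!) E)) ({..<length E} \<times> {..<length E})"
  using assms by (intro map_prod_inj_on inj_on_nth) auto

lemma cyc_edges_lift_form:
  assumes len: "length E = 4 ^ n" and H: "ham_cycle (G_verts n) (G_adj n) H"
    and e: "e \<in> cyc_edges (map (map_prod ((!) E) ((!) E)) H)"
  obtains x d where "d \<in> cyc_edges E" and "e = Pair x ` d \<or> e = (\<lambda>y. (y, x)) ` d"
proof -
  obtain i where i: "i < length H"
    and e_eq: "e = map_prod ((!) E) ((!) E) ` {H ! i, H ! (Suc i mod length H)}"
    using e unfolding cyc_edges_map by (auto simp: cyc_edges_def)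
  obtain a b a' b' where p: "H ! i = (a, b)" and q: "H ! (Suc i mod length H) = (a', b')"
    by fastforce
  have "(a, b) \<in> G_verts n" "(a', b') \<in> G_verts n"
    using H i p q nth_mem Suc_mod_length_less unfolding ham_cycle_def by metis+
  then have bounds: "a < length E" "b < length E" "a' < length E" "b' < length E"
    using len by (auto simp: G_verts_def)
  have "G_adj n (a, b) (a', b')"
    using H i p q unfolding ham_cycle_def by (metis Suc_eq_plus1)
  then consider "a = a'" "b' = Suc b mod length E \<or> b = Suc b' mod length E"
    | "b = b'" "a' = Suc a mod length E \<or> a = Suc a' mod length E"
    unfolding G_adj_def len by auto
  then show ?thesis
  proof cases
    case 1
    then have "e = Pair (E ! a) ` {E ! b, E ! b'}"
      using e_eq p q by simp
    moreover have "{E ! b, E ! b'} \<in> cyc_edges E"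
      using 1(2) bounds(2,4) by (rule cyc_edges_cyclic_neighbours[rotated 2])
    ultimately show ?thesis
      using that by blast
  next
    case 2
    then have "e = (\<lambda>y. (y, E ! b)) ` {E ! a, E ! a'}"
      using e_eq p q by simp
    moreover have "{E ! a, E ! a'} \<in> cyc_edges E"
      using 2(2) bounds(1,3) by (rule cyc_edges_cyclic_neighbours[rotated 2])
    ultimately show ?thesis
      using that by blast
  qed
qed

lemma line_copies_eq_cases:
  assumes "d' \<noteq> {}"
    and "e = Pair x ` d \<or> e = (\<lambda>y. (y, x)) ` d"
    and "e = Pair x' ` d' \<or> e = (\<lambda>y. (y, x')) ` d'"
  shows "d = d' \<or> d = {x'}"
proof -
  have "snd ` Pair x ` d = d" "fst ` (\<lambda>y. (y, x)) ` d = d"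
    "fst ` Pair x' ` d' = {x'}" "snd ` (\<lambda>y. (y, x')) ` d' = {x'}"
    "snd ` Pair x' ` d' = d'" "fst ` (\<lambda>y. (y, x')) ` d' = d'"
    using assms(1) by (auto simp: image_image)
  then show ?thesis
    using assms(2,3) by metis
qed

lemma singleton_notin_dir_ham_Q:
  assumes E: "dir_ham_Q n E" and "1 \<le> n"
  shows "{v} \<notin> cyc_edges E"
proof (rule singleton_notin_cyc_edges)
  show "distinct E"
    using E by (rule distinct_dir_ham_Q)
  have "(4::nat) ^ 1 \<le> 4 ^ n"
    using \<open>1 \<le> n\<close> by (intro power_increasing) auto
  then show "2 \<le> length E"
    unfolding length_dir_ham_Q[OF E] by simp
qed

lemma lifts_disjoint_of_disjoint_E:
  assumes E1: "dir_ham_Q n E1" and E2: "dir_ham_Q n E2" and "1 \<le> n"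
    and disj: "cyc_edges E1 \<inter> cyc_edges E2 = {}"
    and H: "ham_cycle (G_verts n) (G_adj n) H" and H': "ham_cycle (G_verts n) (G_adj n) H'"
  shows "cyc_edges (map (map_prod ((!) E1) ((!) E1)) H)
       \<inter> cyc_edges (map (map_prod ((!) E2) ((!) E2)) H') = {}"
proof (rule ccontr)
  assume "\<not> ?thesis"
  then obtain e where e1: "e \<in> cyc_edges (map (map_prod ((!) E1) ((!) E1)) H)"
    and e2: "e \<in> cyc_edges (map (map_prod ((!) E2) ((!) E2)) H')"
    by blast
  have no_loops: "{v} \<notin> cyc_edges E1" "{v} \<notin> cyc_edges E2" for v
    using singleton_notin_dir_ham_Q E1 E2 \<open>1 \<le> n\<close> by blast+
  have no_empty: "{} \<notin> cyc_edges E2"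
    unfolding cyc_edges_def by blast
  obtain x d where d: "d \<in> cyc_edges E1" and e_d: "e = Pair x ` d \<or> e = (\<lambda>y. (y, x)) ` d"
    using cyc_edges_lift_form[OF length_dir_ham_Q[OF E1] H e1] .
  obtain x' d' where d': "d' \<in> cyc_edges E2"
    and e_d': "e = Pair x' ` d' \<or> e = (\<lambda>y. (y, x')) ` d'"
    using cyc_edges_lift_form[OF length_dir_ham_Q[OF E2] H' e2] .
  have "d' \<noteq> {}"
    using d' no_empty by blast
  then have "d = d' \<or> d = {x'}"
    using e_d e_d' by (rule line_copies_eq_cases)
  then show False
    using d d' disj no_loops by blast
qed

lemma lifts_disjoint_of_disjoint_H:
  assumes E: "dir_ham_Q n E" and "set H \<subseteq> G_verts n" and "set H' \<subseteq> G_verts n"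
    and "cyc_edges H \<inter> cyc_edges H' = {}"
  shows "cyc_edges (map (map_prod ((!) E) ((!) E)) H)
       \<inter> cyc_edges (map (map_prod ((!) E) ((!) E)) H') = {}"
proof (rule cyc_edges_map_disjoint[OF _ assms(2-4)])
  have "G_verts n = {..<length E} \<times> {..<length E}"
    unfolding G_verts_def length_dir_ham_Q[OF E] ..
  then show "inj_on (map_prod ((!) E) ((!) E)) (G_verts n)"
    using inj_on_map_prod_nth[OF distinct_dir_ham_Q[OF E]] by simp
qed

theorem lemma1:
  fixes n :: nat
    and H1 H2 :: "(nat \<times> nat) list"
    and E1 E2 :: "nat list list"
  assumes "n \<ge> 1"
    and "ham_cycle (G_verts n) (G_adj n) H1"
    and "ham_cycle (G_verts n) (G_adj n) H2"
    and "cyc_edges H1 \<inter> cyc_edges H2 = {}"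
    and "dir_ham_Q n E1"
    and "dir_ham_Q n E2"
    and "cyc_edges E1 \<inter> cyc_edges E2 = {}"
  shows "let C = [f_EH n E1 H1, f_EH n E1 H2, f_EH n E2 H1, f_EH n E2 H2]
         in \<forall>i<4. \<forall>j<4. i \<noteq> j \<longrightarrow> cyc_edges (C ! i) \<inter> cyc_edges (C ! j) = {}"
proof -
  have H_verts: "set H1 \<subseteq> G_verts n" "set H2 \<subseteq> G_verts n"
    using assms(2,3) unfolding ham_cycle_def by auto
  note same = lifts_disjoint_of_disjoint_H[OF _ H_verts assms(4)]
  note cross = lifts_disjoint_of_disjoint_E[OF assms(5,6,1,7)]
  show ?thesis
    unfolding Let_def f_EH_eq_map[OF assms(5) H_verts(1)] f_EH_eq_map[OF assms(5) H_verts(2)]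
      f_EH_eq_map[OF assms(6) H_verts(1)] f_EH_eq_map[OF assms(6) H_verts(2)]
    using same[OF assms(5)] same[OF assms(6)] cross[OF assms(2) assms(2)] cross[OF assms(2) assms(3)]
      cross[OF assms(3) assms(2)] cross[OF assms(3) assms(3)]
    by (auto simp: less_Suc_eq numeral_eq_Suc Int_commute)
qed

end
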